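(* Let $\xi_m>0$, $\lambda>0$, $0\le\mu\le\xi_m$ and $T>0$. The equation $$\frac{\xi_m}{\lambda}=2T\ln\frac{\cosh(\sqrt{\xi_m^2+\Delta^2}/2T)}{\cosh(\sqrt{\mu^2+\Delta^2}/2T)}+\mu\int_0^{\mu}\tanh\Big(\frac{\sqrt{\xi^2+\Delta^2}}{2T}\Big)\frac{d\xi}{\sqrt{\xi^2+\Delta^2}}$$ has a positive solution $\Delta$ if and only if $$\frac{\xi_m}{\lambda}<2T\ln\frac{\cosh(\xi_m/2T)}{\cosh(\mu/2T)}+\mu\int_0^{\mu}\tanh\Big(\frac{\xi}{2T}\Big)\frac{d\xi}{\xi},$$ and if a positive solution exists it is unique. *)

theory Defs
  imports "HOL-Analysis.Analysis"
begin

definition gap_rhs :: "real \<Rightarrow> real \<Rightarrow> real \<Rightarrow> real \<Rightarrow> real" where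
  "gap_rhs xi_m mu T D =
     2 * T * ln (cosh (sqrt (xi_m\<^sup>2 + D\<^sup>2) / (2 * T)) / cosh (sqrt (mu\<^sup>2 + D\<^sup>2) / (2 * T)))
     + mu * integral {0..mu} (\<lambda>xi. tanh (sqrt (xi\<^sup>2 + D\<^sup>2) / (2 * T)) / sqrt (xi\<^sup>2 + D\<^sup>2))"

end

theory Submission
  imports Defs
begin

text \<open>
  Write \<open>F(\<Delta>)\<close> for the right-hand side of the gap equation, with the integrand
  \<open>tanh(s/2T)/s\<close>, \<open>s = \<surd>(\<xi>\<^sup>2 + \<Delta>\<^sup>2)\<close>, extended continuously by \<open>1/2T\<close> at \<open>s = 0\<close>.
  Then \<open>F\<close> is continuous on \<open>[0,\<infinity>)\<close>, and \<open>F(0)\<close> is the right-hand side of the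
  criterion. Since \<open>tanh u / u\<close> is strictly decreasing for \<open>u \<ge> 0\<close>, the integral term
  decreases in \<open>\<Delta>\<close> (strictly if \<open>\<mu> > 0\<close>), and so does the log-cosh term (strictly if
  \<open>\<mu> < \<xi>\<^sub>m\<close>), whose derivative is \<open>\<Delta>\<close> times the difference of the integrand at
  \<open>\<surd>(\<xi>\<^sub>m\<^sup>2 + \<Delta>\<^sup>2)\<close> and at \<open>\<surd>(\<mu>\<^sup>2 + \<Delta>\<^sup>2)\<close>. Hence \<open>F\<close> is strictly decreasing.
  Finally \<open>F(\<Delta>) \<le> (\<xi>\<^sub>m\<^sup>2 + \<mu>\<^sup>2)/\<Delta>\<close>, so \<open>F\<close> drops below the positive value
  \<open>\<xi>\<^sub>m/\<lambda>\<close>; the intermediate value theorem and strict monotonicity do the rest.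
\<close>

lemma sinh_real_gt_self:
  assumes "0 < x"
  shows "x < sinh (x::real)"
proof -
  have "(\<lambda>u. sinh u - u) 0 < (\<lambda>u. sinh u - u) x"
  proof (rule DERIV_pos_imp_increasing_open[OF assms])
    fix u :: real
    assume "0 < u" "u < x"
    then have "cosh u \<noteq> 1" by simp
    then have "1 < cosh u"
      using cosh_real_ge_1[of u] by (auto simp: less_le)
    then show "\<exists>y. ((\<lambda>u. sinh u - u) has_real_derivative y) (at u) \<and> 0 < y"
      by (intro exI[of _ "cosh u - 1"]) (auto intro!: derivative_eq_intros)
  qed (intro continuous_intros)
  then show ?thesis by simp
qed

lemma tanh_real_lt_self:
  assumes "0 < x"
  shows "tanh x < (x::real)"
proof -
  have "(\<lambda>u. u - tanh u) 0 < (\<lambda>u. u - tanh u) x"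
  proof (rule DERIV_pos_imp_increasing_open[OF assms])
    fix u :: real
    assume "0 < u" "u < x"
    then show "\<exists>y. ((\<lambda>u. u - tanh u) has_real_derivative y) (at u) \<and> 0 < y"
      by (intro exI[of _ "tanh u ^ 2"]) (auto intro!: derivative_eq_intros)
  qed (intro continuous_intros; simp)
  then show ?thesis by simp
qed

lemma tanh_div_self_strict_antimono:
  assumes "0 < a" "a < b"
  shows "tanh b / b < tanh a / (a::real)"
proof -
  have "(\<lambda>u. tanh u / u) b < (\<lambda>u. tanh u / u) a"
  proof (rule DERIV_neg_imp_decreasing_open[OF assms(2)])
    fix u :: real
    assume "a < u" "u < b"
    then have u: "0 < u" using assms by simp
    have deriv: "((\<lambda>u. tanh u / u) has_real_derivative ((1 - tanh u ^ 2) * u - tanh u) / u\<^sup>2) (at u)"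
      using u by (auto intro!: derivative_eq_intros simp: field_simps power2_eq_square)
    have "1 - tanh u ^ 2 = 1 / cosh u ^ 2"
      using hyperbolic_pythagoras[of u] by (simp add: tanh_def power_divide divide_simps)
    moreover have "u < sinh u * cosh u"
      using sinh_real_gt_self[of "2 * u"] u by (simp add: sinh_double)
    then have "u / cosh u ^ 2 < sinh u / cosh u"
      by (simp add: field_simps power2_eq_square)
    ultimately have "(1 - tanh u ^ 2) * u - tanh u < 0"
      by (simp add: tanh_def)
    then show "\<exists>y. ((\<lambda>u. tanh u / u) has_real_derivative y) (at u) \<and> y < 0"
      using deriv u by (intro exI[of _ "((1 - tanh u ^ 2) * u - tanh u) / u\<^sup>2"]) (simp add: divide_neg_pos)
  qed (use assms in \<open>intro continuous_intros; auto\<close>)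
  then show ?thesis by simp
qed

definition tanhc :: "real \<Rightarrow> real" where
  "tanhc u = (if u = 0 then 1 else tanh u / u)"

lemma isCont_tanhc: "isCont tanhc u"
proof (cases "u = 0")
  case True
  have "(tanh has_real_derivative 1) (at 0)"
    by (auto intro!: derivative_eq_intros)
  then have tendsto: "((\<lambda>h. tanh h / h) \<longlongrightarrow> 1) (at (0::real))"
    by (simp add: DERIV_def)
  have "(tanhc \<longlongrightarrow> 1) (at 0)"
    by (rule Lim_transform_eventually[OF tendsto]) (auto simp: tanhc_def eventually_at_filter)
  then show ?thesis
    using True by (simp add: isCont_def tanhc_def)
next
  case False
  have "\<forall>\<^sub>F x in nhds u. tanh x / x = tanhc x"
    using t1_space_nhds[OF False] by eventually_elim (simp add: tanhc_def)
  moreover have "isCont (\<lambda>x. tanh x / x) u"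
    using False by (intro continuous_intros) auto
  ultimately show ?thesis
    using isCont_cong by metis
qed

lemma continuous_on_tanhc: "continuous_on A tanhc"
  by (simp add: continuous_at_imp_continuous_on isCont_tanhc)

lemma tanhc_strict_antimono:
  assumes "0 \<le> a" "a < b"
  shows "tanhc b < tanhc a"
  using assms tanh_div_self_strict_antimono[of a b] tanh_real_lt_self[of b]
  by (cases "a = 0") (auto simp: tanhc_def)

definition gap_kernel :: "real \<Rightarrow> real \<Rightarrow> real" where
  "gap_kernel T s = tanhc (s / (2 * T)) / (2 * T)"

lemma gap_kernel_eq:
  assumes "0 < T" "s \<noteq> 0"
  shows "gap_kernel T s = tanh (s / (2 * T)) / s"
  using assms by (simp add: gap_kernel_def tanhc_def)

lemma gap_kernel_strict_antimono:
  assumes "0 < T" "0 \<le> a" "a < b"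
  shows "gap_kernel T b < gap_kernel T a"
  using assms tanhc_strict_antimono[of "a / (2 * T)" "b / (2 * T)"]
  by (simp add: gap_kernel_def divide_strict_right_mono)

lemma gap_kernel_le_inverse:
  assumes "0 < T" "0 < s"
  shows "gap_kernel T s \<le> 1 / s"
  using assms tanh_real_lt_1[of "s / (2 * T)"] by (simp add: gap_kernel_eq divide_right_mono)

lemma continuous_on_gap_kernel [continuous_intros]:
  assumes "0 < T" "continuous_on A f"
  shows "continuous_on A (\<lambda>x. gap_kernel T (f x))"
  unfolding gap_kernel_def
  using assms by (intro continuous_intros continuous_on_compose2[OF continuous_on_tanhc]) auto

lemma has_real_derivative_ln_cosh_sqrt:
  assumes "0 < T" "0 < c + D\<^sup>2"
  shows "((\<lambda>D. ln (cosh (sqrt (c + D\<^sup>2) / (2 * T))))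
           has_real_derivative D * gap_kernel T (sqrt (c + D\<^sup>2)) / (2 * T)) (at D)"
proof -
  have "sqrt (c + D\<^sup>2) > 0"
    using assms by simp
  then show ?thesis
    using assms
    by (auto intro!: derivative_eq_intros simp: gap_kernel_eq tanh_def field_simps power2_eq_square)
qed

definition gap_log_term :: "real \<Rightarrow> real \<Rightarrow> real \<Rightarrow> real \<Rightarrow> real" where
  "gap_log_term xi_m mu T D =
     2 * T * ln (cosh (sqrt (xi_m\<^sup>2 + D\<^sup>2) / (2 * T)) / cosh (sqrt (mu\<^sup>2 + D\<^sup>2) / (2 * T)))"

lemma gap_log_term_eq_diff:
  "gap_log_term xi_m mu T D =
     2 * T * (ln (cosh (sqrt (xi_m\<^sup>2 + D\<^sup>2) / (2 * T))) - ln (cosh (sqrt (mu\<^sup>2 + D\<^sup>2) / (2 * T))))"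
  by (simp add: gap_log_term_def ln_div)

lemma continuous_on_gap_log_term:
  assumes "0 < T"
  shows "continuous_on A (gap_log_term xi_m mu T)"
  unfolding gap_log_term_def using assms by (intro continuous_intros) auto

lemma has_real_derivative_gap_log_term:
  assumes "0 < T" "D \<noteq> 0"
  shows "(gap_log_term xi_m mu T has_real_derivative
           D * (gap_kernel T (sqrt (xi_m\<^sup>2 + D\<^sup>2)) - gap_kernel T (sqrt (mu\<^sup>2 + D\<^sup>2)))) (at D)"
proof -
  have "0 < c\<^sup>2 + D\<^sup>2" for c :: real
    using assms by (simp add: add_nonneg_pos)
  then have "((\<lambda>D. 2 * T * (ln (cosh (sqrt (xi_m\<^sup>2 + D\<^sup>2) / (2 * T))) - ln (cosh (sqrt (mu\<^sup>2 + D\<^sup>2) / (2 * T)))))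
      has_real_derivative 2 * T * (D * gap_kernel T (sqrt (xi_m\<^sup>2 + D\<^sup>2)) / (2 * T)
                                 - D * gap_kernel T (sqrt (mu\<^sup>2 + D\<^sup>2)) / (2 * T))) (at D)"
    using assms by (intro DERIV_cmult DERIV_diff has_real_derivative_ln_cosh_sqrt)
  then show ?thesis
    unfolding gap_log_term_eq_diff[abs_def]
    by (rule DERIV_cong) (use assms in \<open>simp add: field_simps\<close>)
qed

lemma gap_log_term_antimono:
  assumes "0 < T" "mu\<^sup>2 \<le> xi_m\<^sup>2"
  shows "antimono_on {0..} (gap_log_term xi_m mu T)"
proof (rule monotone_onI)
  fix D1 D2 :: real
  assume "D1 \<in> {0..}" "D2 \<in> {0..}" "D1 \<le> D2"
  show "gap_log_term xi_m mu T D2 \<le> gap_log_term xi_m mu T D1"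
  proof (rule DERIV_nonpos_imp_decreasing_open[OF \<open>D1 \<le> D2\<close> _ continuous_on_gap_log_term[OF assms(1)]])
    fix D assume "D1 < D" "D < D2"
    then have "0 < D"
      using \<open>D1 \<in> {0..}\<close> by simp
    have "gap_kernel T (sqrt (xi_m\<^sup>2 + D\<^sup>2)) \<le> gap_kernel T (sqrt (mu\<^sup>2 + D\<^sup>2))"
      using assms gap_kernel_strict_antimono[of T "sqrt (mu\<^sup>2 + D\<^sup>2)" "sqrt (xi_m\<^sup>2 + D\<^sup>2)"]
      by (cases "mu\<^sup>2 = xi_m\<^sup>2") auto
    then have "D * (gap_kernel T (sqrt (xi_m\<^sup>2 + D\<^sup>2)) - gap_kernel T (sqrt (mu\<^sup>2 + D\<^sup>2))) \<le> 0"
      using \<open>0 < D\<close> by (simp add: mult_nonneg_nonpos)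
    then show "\<exists>y. (gap_log_term xi_m mu T has_real_derivative y) (at D) \<and> y \<le> 0"
      using has_real_derivative_gap_log_term[OF assms(1), of D xi_m mu] \<open>0 < D\<close> by auto
  qed
qed

lemma gap_log_term_strict_antimono:
  assumes "0 < T" "mu\<^sup>2 < xi_m\<^sup>2"
  shows "strict_antimono_on {0..} (gap_log_term xi_m mu T)"
proof (rule monotone_onI)
  fix D1 D2 :: real
  assume "D1 \<in> {0..}" "D2 \<in> {0..}" "D1 < D2"
  show "gap_log_term xi_m mu T D2 < gap_log_term xi_m mu T D1"
  proof (rule DERIV_neg_imp_decreasing_open[OF \<open>D1 < D2\<close> _ continuous_on_gap_log_term[OF assms(1)]])
    fix D assume "D1 < D" "D < D2"
    then have "0 < D"
      using \<open>D1 \<in> {0..}\<close> by simp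
    have "gap_kernel T (sqrt (xi_m\<^sup>2 + D\<^sup>2)) < gap_kernel T (sqrt (mu\<^sup>2 + D\<^sup>2))"
      using assms by (intro gap_kernel_strict_antimono) auto
    then have "D * (gap_kernel T (sqrt (xi_m\<^sup>2 + D\<^sup>2)) - gap_kernel T (sqrt (mu\<^sup>2 + D\<^sup>2))) < 0"
      using \<open>0 < D\<close> by (simp add: mult_pos_neg)
    then show "\<exists>y. (gap_log_term xi_m mu T has_real_derivative y) (at D) \<and> y < 0"
      using has_real_derivative_gap_log_term[OF assms(1), of D xi_m mu] \<open>0 < D\<close> by auto
  qed
qed

definition gap_integral :: "real \<Rightarrow> real \<Rightarrow> real \<Rightarrow> real" where
  "gap_integral mu T D = integral {0..mu} (\<lambda>xi. gap_kernel T (sqrt (xi\<^sup>2 + D\<^sup>2)))"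

lemma continuous_on_gap_integral:
  assumes "0 < T"
  shows "continuous_on A (gap_integral mu T)"
proof -
  have "continuous_on A (\<lambda>D. integral (cbox 0 mu) (\<lambda>xi. gap_kernel T (sqrt (xi\<^sup>2 + D\<^sup>2))))"
    using assms by (intro integral_continuous_on_param) (auto intro!: continuous_intros simp: split_beta)
  then show ?thesis
    by (simp add: gap_integral_def[abs_def])
qed

lemma gap_integral_strict_antimono:
  assumes "0 < T" "0 < mu"
  shows "strict_antimono_on {0..} (gap_integral mu T)"
proof (rule monotone_onI)
  fix D1 D2 :: real
  assume "D1 \<in> {0..}" "D2 \<in> {0..}" "D1 < D2"
  then have "D1\<^sup>2 < D2\<^sup>2"
    by (simp add: power_strict_mono)
  show "gap_integral mu T D2 < gap_integral mu T D1"
    unfolding gap_integral_def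
  proof (rule integral_less_real)
    fix xi
    show "gap_kernel T (sqrt (xi\<^sup>2 + D2\<^sup>2)) < gap_kernel T (sqrt (xi\<^sup>2 + D1\<^sup>2))"
      using assms \<open>D1\<^sup>2 < D2\<^sup>2\<close> by (intro gap_kernel_strict_antimono) auto
  qed (use assms in \<open>auto intro!: continuous_intros\<close>)
qed

lemma gap_integral_le:
  assumes "0 < T" "0 \<le> mu" "0 < D"
  shows "gap_integral mu T D \<le> mu / D"
proof -
  have "gap_integral mu T D \<le> integral {0..mu} (\<lambda>xi. 1 / D)"
    unfolding gap_integral_def
  proof (rule integral_le)
    fix xi :: real
    have "D \<le> sqrt (xi\<^sup>2 + D\<^sup>2)"
      using assms by (simp add: real_le_rsqrt)
    then have "gap_kernel T (sqrt (xi\<^sup>2 + D\<^sup>2)) \<le> 1 / sqrt (xi\<^sup>2 + D\<^sup>2)"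
      using assms by (intro gap_kernel_le_inverse) (auto simp: add_nonneg_pos)
    also have "\<dots> \<le> 1 / D"
      using \<open>D \<le> sqrt (xi\<^sup>2 + D\<^sup>2)\<close> assms by (simp add: frac_le)
    finally show "gap_kernel T (sqrt (xi\<^sup>2 + D\<^sup>2)) \<le> 1 / D" .
  qed (use assms in \<open>auto intro!: integrable_continuous_interval continuous_intros\<close>)
  also have "\<dots> = mu / D"
    using assms by simp
  finally show ?thesis .
qed

lemma ln_cosh_diff_le:
  assumes "0 \<le> y" "y \<le> (x::real)"
  shows "ln (cosh x) - ln (cosh y) \<le> x - y"
proof -
  have "cosh y * exp (x - y) = (exp x + exp (x - 2 * y)) / 2"
    by (simp add: cosh_def field_simps flip: exp_add)
  moreover have "exp (- x) \<le> exp (x - 2 * y)"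
    using assms by simp
  ultimately have "cosh x \<le> cosh y * exp (x - y)"
    by (simp add: cosh_def)
  then have "ln (cosh x) \<le> ln (cosh y) + (x - y)"
    by (simp add: ln_mult flip: ln_le_cancel_iff[of "cosh x"])
  then show ?thesis by simp
qed

lemma gap_log_term_le:
  assumes "0 < T" "mu\<^sup>2 \<le> xi_m\<^sup>2" "0 < D"
  shows "gap_log_term xi_m mu T D \<le> xi_m\<^sup>2 / D"
proof -
  define a where "a = sqrt (xi_m\<^sup>2 + D\<^sup>2)"
  define b where "b = sqrt (mu\<^sup>2 + D\<^sup>2)"
  have "D \<le> b" "b \<le> a"
    using assms by (simp_all add: a_def b_def real_le_rsqrt)
  have "xi_m\<^sup>2 + D\<^sup>2 \<le> (D + xi_m\<^sup>2 / D)\<^sup>2"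
    using assms by (simp add: power2_sum)
  then have "a \<le> D + xi_m\<^sup>2 / D"
    using assms unfolding a_def by (intro real_le_lsqrt) auto
  have "gap_log_term xi_m mu T D = 2 * T * (ln (cosh (a / (2 * T))) - ln (cosh (b / (2 * T))))"
    by (simp add: gap_log_term_eq_diff a_def b_def)
  also have "\<dots> \<le> 2 * T * (a / (2 * T) - b / (2 * T))"
    using assms \<open>D \<le> b\<close> \<open>b \<le> a\<close>
    by (intro mult_left_mono ln_cosh_diff_le divide_right_mono) auto
  also have "\<dots> = a - b"
    using assms by (simp add: field_simps)
  also have "\<dots> \<le> xi_m\<^sup>2 / D"
    using \<open>a \<le> D + xi_m\<^sup>2 / D\<close> \<open>D \<le> b\<close> by simp
  finally show ?thesis .
qed

definition gap_fun :: "real \<Rightarrow> real \<Rightarrow> real \<Rightarrow> real \<Rightarrow> real" where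
  "gap_fun xi_m mu T D = gap_log_term xi_m mu T D + mu * gap_integral mu T D"

lemma gap_rhs_eq_gap_fun:
  assumes "0 < T" "D \<noteq> 0"
  shows "gap_rhs xi_m mu T D = gap_fun xi_m mu T D"
proof -
  have "sqrt (xi\<^sup>2 + D\<^sup>2) \<noteq> 0" for xi
    using assms by (simp add: add_nonneg_pos)
  then show ?thesis
    using assms by (simp add: gap_rhs_def gap_fun_def gap_log_term_def gap_integral_def gap_kernel_eq)
qed

lemma gap_fun_0:
  assumes "0 < T"
  shows "gap_fun xi_m mu T 0 = 2 * T * ln (cosh (xi_m / (2 * T)) / cosh (mu / (2 * T)))
                               + mu * integral {0..mu} (\<lambda>xi. tanh (xi / (2 * T)) / xi)"
proof -
  have "gap_integral mu T 0 = integral {0..mu} (\<lambda>xi. tanh (xi / (2 * T)) / xi)"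
    unfolding gap_integral_def
    by (rule integral_spike[of "{0}"]) (use assms in \<open>auto simp: gap_kernel_eq\<close>)
  moreover have cosh_abs: "cosh (\<bar>x\<bar> / (2 * T)) = cosh (x / (2 * T))" for x
    using assms cosh_real_abs[of "x / (2 * T)"] by simp
  ultimately show ?thesis
    by (simp add: gap_fun_def gap_log_term_def cosh_abs)
qed

lemma continuous_on_gap_fun:
  assumes "0 < T"
  shows "continuous_on A (gap_fun xi_m mu T)"
  unfolding gap_fun_def[abs_def]
  using assms by (intro continuous_intros continuous_on_gap_log_term continuous_on_gap_integral)

lemma gap_fun_strict_antimono:
  assumes "0 < T" "0 \<le> mu" "mu \<le> xi_m" "0 < xi_m"
  shows "strict_antimono_on {0..} (gap_fun xi_m mu T)"
proof (cases "mu = 0")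
  case True
  then show ?thesis
    using assms gap_log_term_strict_antimono[of T mu xi_m] by (simp add: gap_fun_def[abs_def])
next
  case False
  then have "0 < mu"
    using assms by simp
  have "mu\<^sup>2 \<le> xi_m\<^sup>2"
    using assms by (simp add: power_mono)
  show ?thesis
  proof (rule monotone_onI)
    fix D1 D2 :: real
    assume "D1 \<in> {0..}" "D2 \<in> {0..}" "D1 < D2"
    then have "gap_log_term xi_m mu T D2 \<le> gap_log_term xi_m mu T D1"
      and "gap_integral mu T D2 < gap_integral mu T D1"
      using assms \<open>0 < mu\<close> \<open>mu\<^sup>2 \<le> xi_m\<^sup>2\<close>
        monotone_onD[OF gap_log_term_antimono] monotone_onD[OF gap_integral_strict_antimono]
      by auto
    then show "gap_fun xi_m mu T D2 < gap_fun xi_m mu T D1"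
      using \<open>0 < mu\<close> by (simp add: gap_fun_def add_mono_thms_linordered_field)
  qed
qed

lemma gap_fun_le:
  assumes "0 < T" "0 \<le> mu" "mu \<le> xi_m" "0 < D"
  shows "gap_fun xi_m mu T D \<le> (xi_m\<^sup>2 + mu\<^sup>2) / D"
proof -
  have "gap_log_term xi_m mu T D \<le> xi_m\<^sup>2 / D"
    using assms by (intro gap_log_term_le) (auto simp: power_mono)
  moreover have "mu * gap_integral mu T D \<le> mu * (mu / D)"
    using assms by (intro mult_left_mono gap_integral_le) auto
  ultimately show ?thesis
    by (simp add: gap_fun_def add_divide_distrib power2_eq_square)
qed

lemma exists_gap_fun_less:
  assumes "0 < T" "0 \<le> mu" "mu \<le> xi_m" "0 < c"
  shows "\<exists>D>0. gap_fun xi_m mu T D < c"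
proof -
  define D where "D = 2 * (xi_m\<^sup>2 + mu\<^sup>2) / c + 1"
  have "0 \<le> 2 * (xi_m\<^sup>2 + mu\<^sup>2) / c"
    using assms by simp
  then have "0 < D"
    by (simp add: D_def)
  have "gap_fun xi_m mu T D \<le> (xi_m\<^sup>2 + mu\<^sup>2) / D"
    using assms \<open>0 < D\<close> by (intro gap_fun_le)
  also have "\<dots> < c"
  proof -
    have "c * D = 2 * (xi_m\<^sup>2 + mu\<^sup>2) + c"
      using assms by (simp add: D_def field_simps)
    then have "xi_m\<^sup>2 + mu\<^sup>2 < c * D"
      using assms by (simp add: add_nonneg_pos)
    then show ?thesis
      using \<open>0 < D\<close> by (simp add: pos_divide_less_eq mult.commute)
  qed
  finally show ?thesis
    using \<open>0 < D\<close> by blast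
qed

lemma strict_antimono_on_pos_solution_iff:
  fixes f :: "real \<Rightarrow> real"
  assumes "continuous_on {0..} f" "strict_antimono_on {0..} f" "0 \<le> D0" "f D0 < c"
  shows "(\<exists>D>0. f D = c) \<longleftrightarrow> c < f 0"
proof
  assume "\<exists>D>0. f D = c"
  then show "c < f 0"
    using monotone_onD[OF assms(2), of 0] by force
next
  assume "c < f 0"
  then obtain D where "0 \<le> D" "D \<le> D0" "f D = c"
    using IVT2'[of f D0 c 0] assms continuous_on_subset[OF assms(1)] by force
  moreover have "D \<noteq> 0"
    using \<open>c < f 0\<close> \<open>f D = c\<close> by auto
  ultimately show "\<exists>D>0. f D = c"
    by (intro exI[of _ D]) auto
qed

theorem mainTheorem6:
  fixes xi_m lam mu T :: real
  assumes "xi_m > 0" and "lam > 0" and "0 \<le> mu" and "mu \<le> xi_m" and "T > 0"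
  shows "((\<exists>D>0. xi_m / lam = gap_rhs xi_m mu T D) \<longleftrightarrow>
            xi_m / lam < 2 * T * ln (cosh (xi_m / (2 * T)) / cosh (mu / (2 * T)))
                         + mu * integral {0..mu} (\<lambda>xi. tanh (xi / (2 * T)) / xi))
         \<and> (\<forall>D1 D2. D1 > 0 \<longrightarrow> D2 > 0 \<longrightarrow> xi_m / lam = gap_rhs xi_m mu T D1
                    \<longrightarrow> xi_m / lam = gap_rhs xi_m mu T D2 \<longrightarrow> D1 = D2)"
proof -
  let ?F = "gap_fun xi_m mu T"
  have rhs: "gap_rhs xi_m mu T D = ?F D" if "D > 0" for D
    using assms that by (intro gap_rhs_eq_gap_fun) auto
  have decr: "strict_antimono_on {0..} ?F"
    using assms by (intro gap_fun_strict_antimono)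
  obtain D0 where "D0 > 0" "?F D0 < xi_m / lam"
    using assms exists_gap_fun_less[of T mu xi_m "xi_m / lam"] by auto
  then have "(\<exists>D>0. ?F D = xi_m / lam) \<longleftrightarrow> xi_m / lam < ?F 0"
    using assms decr continuous_on_gap_fun
    by (intro strict_antimono_on_pos_solution_iff[of ?F D0]) auto
  moreover have "inj_on ?F {0..}"
    using decr strict_antimono_iff_antimono by blast
  ultimately show ?thesis
    using assms rhs gap_fun_0[of T xi_m mu] by (auto dest: inj_onD)
qed

end
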